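(* Let $p$ be an odd prime and $\mathbf{k}$ a field of characteristic $p$. Then, in $\mathbf{k}(f,g,\alpha_1,\alpha_2,t)$, $$s_0(\mathcal{I}_p)=\mathcal{I}_p,\quad s_1(\mathcal{I}_p)=\mathcal{I}_p+t^p(\alpha_1^p-\alpha_1),\quad s_2(\mathcal{I}_p)=\mathcal{I}_p-t^p(\alpha_2^p-\alpha_2),\quad \pi(\mathcal{I}_p)=\mathcal{I}_p-t^p(\alpha_2^p-\alpha_2).$$ For $p=2$ the same formulas hold with $t^2$ replaced by $1+t^2$ on the right-hand sides, i.e. $s_0(\mathcal{I}_2)=\mathcal{I}_2$, $s_1(\mathcal{I}_2)=\mathcal{I}_2+(1+t^2)(\alpha_1^2-\alpha_1)$, $s_2(\mathcal{I}_2)=\mathcal{I}_2-(1+t^2)(\alpha_2^2-\alpha_2)$, $\pi(\mathcal{I}_2)=\mathcal{I}_2-(1+t^2)(\alpha_2^2-\alpha_2)$.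
   Context: On $\mathbf{k}(f,g,\alpha_1,\alpha_2,t)$ let $s_0,s_1,s_2,\pi$ be the $\mathbf{k}$-linear field automorphisms fixing $t$ and acting by: $s_0:\ \alpha_1\mapsto 1-\alpha_2,\ \alpha_2\mapsto1-\alpha_1,\ f\mapsto f+\frac{\alpha_1+\alpha_2-1}{f-g+t},\ g\mapsto g+\frac{\alpha_1+\alpha_2-1}{f-g+t}$; $s_1:\ \alpha_1\mapsto-\alpha_1,\ \alpha_2\mapsto\alpha_1+\alpha_2,\ f\mapsto f,\ g\mapsto g-\frac{\alpha_1}{f}$; $s_2:\ \alpha_1\mapsto\alpha_1+\alpha_2,\ \alpha_2\mapsto-\alpha_2,\ f\mapsto f+\frac{\alpha_2}{g},\ g\mapsto g$; $\pi:\ \alpha_1\mapsto\alpha_2,\ \alpha_2\mapsto1-\alpha_1-\alpha_2,\ f\mapsto -g,\ g\mapsto f-g+t$. Define the $2\times2$ matrix polynomial in $z$ $$A(z)=\begin{bmatrix}w&0\\0&1\end{bmatrix}\begin{bmatrix}1&0\\ f-tfg-tz&1\end{bmatrix}\begin{bmatrix}g&1\\ z+\alpha_2&0\end{bmatrix}\begin{bmatrix}-f&1\\ z&0\end{bmatrix}\begin{bmatrix}tz-g+tfg&1\\ z-\alpha_1&0\end{bmatrix}\begin{bmatrix}w^{-1}&0\\0&1\end{bmatrix}$$ and $\mathcal{I}_p:=\operatorname{Tr}[A(p-1)\cdots A(1)A(0)]$ computed in characteristic $p$, an element of $\mathbb{F}_p[f,g,\alpha_1,\alpha_2,t]$ independent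 of $w$, viewed in $\mathbf{k}(f,g,\alpha_1,\alpha_2,t)$. *)

theory Defs
  imports "HOL-Computational_Algebra.Polynomial" "HOL-Computational_Algebra.Fraction_Field"
begin

text \<open>2x2 matrices over a commutative ring, written as (a11, a12, a21, a22).\<close>
type_synonym 'a mat2 = "'a \<times> 'a \<times> 'a \<times> 'a"

fun mmul2 :: "'a::comm_ring_1 mat2 \<Rightarrow> 'a mat2 \<Rightarrow> 'a mat2" where
  "mmul2 (a, b, c, d) (e, f, g, h) = (a*e + b*g, a*f + b*h, c*e + d*g, c*f + d*h)"

fun tr2 :: "'a::comm_ring_1 mat2 \<Rightarrow> 'a" where
  "tr2 (a, b, c, d) = a + d"

definition id2 :: "'a::comm_ring_1 mat2" where
  "id2 = (1, 0, 0, 1)"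

definition Amat :: "'a::field \<Rightarrow> 'a \<Rightarrow> 'a \<Rightarrow> 'a \<Rightarrow> 'a \<Rightarrow> 'a \<Rightarrow> 'a \<Rightarrow> 'a mat2" where
  "Amat w f g a1 a2 t z =
     mmul2 (w, 0, 0, 1)
    (mmul2 (1, 0, f - t*f*g - t*z, 1)
    (mmul2 (g, 1, z + a2, 0)
    (mmul2 (- f, 1, z, 0)
    (mmul2 (t*z - g + t*f*g, 1, z - a1, 0)
           (inverse w, 0, 0, 1)))))"

fun prodA :: "'a::field \<Rightarrow> 'a \<Rightarrow> 'a \<Rightarrow> 'a \<Rightarrow> 'a \<Rightarrow> 'a \<Rightarrow> nat \<Rightarrow> 'a mat2" where
  "prodA w f g a1 a2 t 0 = id2"
| "prodA w f g a1 a2 t (Suc n) = mmul2 (Amat w f g a1 a2 t (of_nat n)) (prodA w f g a1 a2 t n)"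

definition Ip :: "nat \<Rightarrow> 'a::field \<Rightarrow> 'a \<Rightarrow> 'a \<Rightarrow> 'a \<Rightarrow> 'a \<Rightarrow> 'a \<Rightarrow> 'a" where
  "Ip p w f g a1 a2 t = tr2 (prodA w f g a1 a2 t p)"

text \<open>The rational function field k(f,g,alpha1,alpha2,t) as the fraction field of
  k[f][g][alpha1][alpha2][t].\<close>
type_synonym 'k poly5 = "'k poly poly poly poly poly"
type_synonym 'k ratfun5 = "'k poly5 fract"

definition varF :: "'k::field ratfun5" where
  "varF = Fract [:[:[:[:monom 1 1:]:]:]:] 1"
definition varG :: "'k::field ratfun5" where
  "varG = Fract [:[:[:monom 1 1:]:]:] 1"
definition varA1 :: "'k::field ratfun5" where
  "varA1 = Fract [:[:monom 1 1:]:] 1"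
definition varA2 :: "'k::field ratfun5" where
  "varA2 = Fract [:monom 1 1:] 1"
definition varT :: "'k::field ratfun5" where
  "varT = Fract (monom 1 1) 1"

end

theory Submission
  imports Defs "HOL-Number_Theory.Cong"
begin

text \<open>Conjugating away w and moving the lower unitriangular factor of each A(i) to the end of
  A(i - 1), the trace I_p becomes the trace J(0) of a product of p blocks
  E(a1, n + x + b1) E(a2, n + x + b2) E(a3, n + x + b3), n = 0, ..., p - 1, where
  E(a, w) = [a 1; w 0] and (a1, a2, a3) = (g, -f, f - g + t). Each of s0, s1, s2, \<pi> acts on these
  blocks by rotating the three factors cyclically, exchanging two adjacent factors and shifting x,
  so that it maps I_p to J(x) for x = 0, \<alpha>1, -\<alpha>2 or 1 - \<alpha>2.

  It remains to show J(x) = J(0) + c (x^p - x). As a polynomial in x, J is invariant under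
  x \<mapsto> x + 1 and has degree < 2p, which forces this shape with c the coefficient of x^p. To compute c
  for odd p, expand the product into words in the three coefficient matrices of a block: the heavy
  words are killed by degree, the light non-constant ones cancel along rotation classes because
  power sums over \<open>\<int>/p\<close> vanish, and the constant word gives tr(H^p) = tr(H)^p = (a1+a2+a3)^p = t^p.
  For p = 2 the identity is checked directly.\<close>

section \<open>Arithmetic in characteristic p\<close>

lemma CHAR_eq_prime:
  assumes "prime p" "of_nat p = (0::'a::ring_1)"
  shows "CHAR('a) = p"
proof -
  have "CHAR('a) dvd p" using assms(2) by (simp add: of_nat_eq_0_iff_char_dvd)
  thus ?thesis using assms(1) CHAR_not_1 by (metis One_nat_def prime_nat_iff)
qed

lemma of_nat_eq_0_iff_prime_dvd:
  assumes "prime p" "of_nat p = (0::'a::ring_1)"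
  shows "of_nat n = (0::'a) \<longleftrightarrow> p dvd n"
  using CHAR_eq_prime[OF assms] by (simp add: of_nat_eq_0_iff_char_dvd)

lemma of_nat_inj_below_prime:
  assumes "prime p" "of_nat p = (0::'a::ring_1)" "r < p" "s < p" "of_nat r = (of_nat s::'a)"
  shows "r = s"
  using assms(5) CHAR_eq_prime[OF assms(1,2)] assms(3,4)
  by (auto simp: of_nat_eq_iff_cong_CHAR intro: cong_less_modulus_unique_nat)

lemma of_nat_mod_eq:
  assumes "of_nat p = (0::'a::semiring_1)"
  shows "of_nat (n mod p) = (of_nat n :: 'a)"
proof -
  have "(of_nat n :: 'a) = of_nat p * of_nat (n div p) + of_nat (n mod p)"
    by (metis div_mult_mod_eq mult.commute of_nat_add of_nat_mult)
  thus ?thesis using assms by simp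
qed

lemma of_nat_divide_in_prime_field:
  assumes "prime p" "of_nat p = (0::'a::field)" "of_nat b \<noteq> (0::'a)"
  shows "\<exists>r<p. (of_nat a / of_nat b :: 'a) = of_nat r"
proof -
  have "coprime b p"
    using assms by (metis of_nat_eq_0_iff_prime_dvd prime_imp_coprime coprime_commute)
  then obtain x where "[b * x = 1] (mod p)" using cong_solve_coprime_nat by auto
  hence "(of_nat b * of_nat x :: 'a) = 1"
    by (metis cong_def of_nat_1 of_nat_mod_eq[OF assms(2)] of_nat_mult)
  hence "(of_nat a / of_nat b :: 'a) = of_nat ((a * x) mod p)"
    using assms(3) by (simp add: of_nat_mod_eq[OF assms(2)] field_simps)
  thus ?thesis using assms(1) prime_gt_0_nat by (intro exI[of _ "(a * x) mod p"]) auto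
qed

lemma binomial_commuting:
  fixes x y :: "'a::ring_1"
  assumes "x * y = y * x"
  shows "(x + y) ^ n = (\<Sum>k\<le>n. of_nat (n choose k) * x ^ k * y ^ (n - k))"
proof (induction n)
  case 0
  show ?case by simp
next
  case (Suc n)
  define a where "a k = of_nat (n choose k) * x ^ k * y ^ (Suc n - k)" for k
  define b where "b k = (if k = 0 then 0 else of_nat (n choose (k - 1)) * x ^ k * y ^ (Suc n - k))"
    for k
  have of_nat_left_commute: "z * (of_nat c * u) = of_nat c * (z * u)" for z u :: 'a and c
    by (metis mult.assoc mult_of_nat_commute)
  have x_step: "x * (of_nat c * x ^ k * y ^ m) = of_nat c * x ^ Suc k * y ^ m" for c k m
    by (simp add: mult.assoc of_nat_left_commute)
  have y_step: "y * (of_nat c * x ^ k * y ^ m) = of_nat c * x ^ k * y ^ Suc m" for c k m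
    by (simp add: mult.assoc of_nat_left_commute power_commuting_commutes[OF assms, symmetric]
        flip: mult.assoc[of y])
  have "(x + y) ^ Suc n = (\<Sum>k\<le>n. of_nat (n choose k) * x ^ Suc k * y ^ (n - k))
      + (\<Sum>k\<le>n. of_nat (n choose k) * x ^ k * y ^ Suc (n - k))"
    by (simp only: power_Suc Suc.IH distrib_right sum_distrib_left x_step y_step sum.distrib)
  also have "(\<Sum>k\<le>n. of_nat (n choose k) * x ^ Suc k * y ^ (n - k)) = (\<Sum>k\<le>Suc n. b k)"
    by (subst sum.atMost_Suc_shift) (simp add: b_def)
  also have "(\<Sum>k\<le>n. of_nat (n choose k) * x ^ k * y ^ Suc (n - k)) = (\<Sum>k\<le>Suc n. a k)"
    by (simp add: sum.atMost_Suc a_def Suc_diff_le binomial_eq_0)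
  finally have "(x + y) ^ Suc n = (\<Sum>k\<le>Suc n. b k + a k)"
    by (simp add: sum.distrib)
  moreover have "b k + a k = of_nat (Suc n choose k) * x ^ k * y ^ (Suc n - k)" for k
    by (cases k) (simp_all add: a_def b_def distrib_right)
  ultimately show ?case by simp
qed

lemma add_power_prime_char_commuting:
  fixes x y :: "'a::ring_1"
  assumes "prime p" "of_nat p = (0::'a)" "x * y = y * x"
  shows "(x + y) ^ p = x ^ p + y ^ p"
proof -
  have p: "0 < p" using assms(1) prime_gt_0_nat by blast
  have "of_nat (p choose k) = (0::'a)" if "0 < k" "k < p" for k
    using dvd_choose_prime[of k p] that assms(1,2) by (auto simp: of_nat_eq_0_iff_prime_dvd)
  hence "(\<Sum>k\<in>{1..<p}. of_nat (p choose k) * x ^ k * y ^ (p - k)) = 0"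
    by (intro sum.neutral) auto
  moreover have "{..p} = insert 0 (insert p {1..<p})" using p by auto
  ultimately show ?thesis using p by (simp add: binomial_commuting[OF assms(3)] add.commute)
qed

lemma add_power_prime_char:
  fixes x y :: "'a::comm_ring_1"
  assumes "prime p" "of_nat p = (0::'a)"
  shows "(x + y) ^ p = x ^ p + y ^ p"
  using add_power_prime_char_commuting[OF assms mult.commute] .

lemma diff_power_prime_char:
  fixes x y :: "'a::comm_ring_1"
  assumes "prime p" "of_nat p = (0::'a)"
  shows "(x - y) ^ p = x ^ p - y ^ p"
  using add_power_prime_char[OF assms, of "x - y" y] by (simp add: algebra_simps)

lemma sum_of_nat_power_eq_0:
  assumes "prime p" "of_nat p = (0::'a::idom)" "j < p - 1"
  shows "(\<Sum>r<p. (of_nat r::'a) ^ j) = 0"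
  using assms(3)
proof (induction j rule: less_induct)
  case (less j)
  define S where "S i = (\<Sum>r<p. (of_nat r::'a) ^ i)" for i
  have IH: "S i = 0" if "i < j" for i using less that by (simp add: S_def)
  have binomial: "(of_nat (Suc r)::'a) ^ Suc j - of_nat r ^ Suc j
      = (\<Sum>i\<le>j. of_nat (Suc j choose i) * of_nat r ^ i)" for r
    using binomial_ring[of "of_nat r" "1::'a" "Suc j"] by (simp add: sum.atMost_Suc add.commute)
  have "0 = (\<Sum>r<p. (of_nat (Suc r)::'a) ^ Suc j - of_nat r ^ Suc j)"
    using sum_lessThan_telescope[of "\<lambda>r. (of_nat r::'a) ^ Suc j" p] assms(2) by simp
  also have "\<dots> = (\<Sum>i\<le>j. of_nat (Suc j choose i) * S i)"
    by (simp only: binomial, subst sum.swap) (simp add: S_def sum_distrib_left)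
  also have "\<dots> = of_nat (Suc j) * S j"
    by (simp add: lessThan_Suc_atMost[symmetric] sum.lessThan_Suc IH)
  finally have "of_nat (Suc j) * S j = 0" by simp
  moreover have "of_nat (Suc j) \<noteq> (0::'a)"
    using less.prems of_nat_eq_0_iff_prime_dvd[OF assms(1,2), of "Suc j"] by (auto dest: dvd_imp_le)
  ultimately show ?case by (simp add: S_def)
qed

lemma sum_poly_of_nat_eq_0:
  assumes "prime p" "of_nat p = (0::'a::idom)" "degree h < p - 1"
  shows "(\<Sum>r<p. poly h (of_nat r::'a)) = 0"
proof -
  have "(\<Sum>r<p. poly h (of_nat r::'a)) = (\<Sum>i\<le>degree h. coeff h i * (\<Sum>r<p. (of_nat r::'a) ^ i))"
    by (simp add: poly_altdef sum_distrib_left) (rule sum.swap)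
  also have "\<dots> = 0"
    using sum_of_nat_power_eq_0[OF assms(1,2)] assms(3) by (intro sum.neutral) auto
  finally show ?thesis .
qed

section \<open>Shift-invariant polynomials\<close>

lemma coeff_pcompose_shift_pred_degree:
  fixes h :: "'a::comm_ring_1 poly"
  assumes "degree h = Suc m"
  shows "coeff (pcompose h [:1, 1:]) m = coeff h m + of_nat (Suc m) * coeff h (Suc m)"
proof -
  have "pcompose h [:1, 1:] = (\<Sum>i\<le>Suc m. smult (coeff h i) ([:1, 1:] ^ i))"
    by (simp add: pcompose_altdef poly_altdef degree_map_poly coeff_map_poly assms)
  hence "coeff (pcompose h [:1, 1:]) m = (\<Sum>i\<le>Suc m. coeff h i * coeff ([:1, 1:] ^ i) m)"
    by (simp add: coeff_sum)
  also have "\<dots> = coeff h m * coeff ([:1, 1:] ^ m) m + coeff h (Suc m) * coeff ([:1, 1:] ^ Suc m) m"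
  proof -
    have "coeff ([:1::'a, 1:] ^ i) m = 0" if "i < m" for i
      using that by (simp add: coeff_eq_0 degree_linear_power)
    thus ?thesis by (simp add: lessThan_Suc_atMost[symmetric] sum.lessThan_Suc)
  qed
  also have "\<dots> = coeff h m + of_nat (Suc m) * coeff h (Suc m)"
    using coeff_linear_power[of "1::'a" m] coeff_linear_poly_power[of m "Suc m" "1::'a" 1]
    by (simp add: mult.commute)
  finally show ?thesis .
qed

text \<open>The coefficient of X^(n-1) in h(X + 1) - h(X) is n lc(h) for n = deg h, so p divides n.\<close>
lemma shift_invariant_poly_eq_const:
  fixes h :: "'a::idom poly"
  assumes "prime p" "of_nat p = (0::'a)" "pcompose h [:1, 1:] = h" "degree h < 2 * p"
    and "coeff h p = 0"
  shows "h = [:coeff h 0:]"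
proof (cases "degree h")
  case 0
  thus ?thesis by (metis degree_eq_zeroE coeff_pCons_0)
next
  case (Suc m)
  have lead: "coeff h (Suc m) \<noteq> 0" using Suc leading_coeff_0_iff[of h] by force
  have "of_nat (Suc m) * coeff h (Suc m) = 0"
    using coeff_pcompose_shift_pred_degree[OF Suc] assms(3) by simp
  hence "of_nat (Suc m) = (0::'a)" using lead by simp
  hence "p dvd Suc m" using of_nat_eq_0_iff_prime_dvd[OF assms(1,2)] by blast
  then obtain q where q: "Suc m = p * q" by (auto elim: dvdE)
  have "q = 1"
    using q assms(4) Suc by (cases q) (auto simp: mult_less_cancel1)
  thus ?thesis using q assms(5) lead by simp
qed

lemma shift_invariant_poly_eq:
  fixes q :: "'a::idom poly"
  assumes "prime p" "of_nat p = (0::'a)" "pcompose q [:1, 1:] = q" "degree q < 2 * p"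
  shows "q = [:coeff q 0:] + smult (coeff q p) (monom 1 p - monom 1 1)"
proof -
  have p: "2 \<le> p" using assms(1) prime_ge_2_nat by blast
  have p0: "of_nat p = (0::'a poly)" using assms(2) by (simp add: of_nat_poly)
  define h where "h = q - [:coeff q 0:] - smult (coeff q p) (monom 1 p - monom 1 1)"
  have "pcompose (monom 1 n) r = r ^ n" for n and r :: "'a poly"
    by (induction n) (simp_all add: monom_altdef pcompose_mult pcompose_1 pcompose_pCons)
  hence "pcompose (monom 1 p - monom 1 1) [:1, 1:] = ([:1, 1:] :: 'a poly) ^ p - [:1, 1:]"
    by (simp add: pcompose_diff)
  also have "\<dots> = monom 1 p - monom 1 1"
    using add_power_prime_char[OF assms(1) p0, of "monom 1 1" 1]
    by (simp add: monom_altdef one_pCons poly_const_pow algebra_simps)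
  finally have "pcompose h [:1, 1:] = h"
    using assms(3) by (simp add: h_def pcompose_diff pcompose_smult)
  moreover have "degree h < 2 * p"
  proof -
    have "coeff h k = 0" if "2 * p \<le> k" for k
      using that p assms(4) by (simp add: h_def coeff_pCons coeff_eq_0 split: nat.splits)
    hence "degree h \<le> 2 * p - 1" by (intro degree_le) simp
    thus ?thesis using p by linarith
  qed
  moreover have "coeff h p = 0" "coeff h 0 = 0"
    using p by (simp_all add: h_def coeff_pCons split: nat.splits)
  ultimately have "h = 0" using shift_invariant_poly_eq_const[OF assms(1,2)] by (metis pCons_0_0)
  thus ?thesis by (simp add: h_def algebra_simps)
qed

section \<open>2x2 matrices\<close>

datatype 'a m2 = M2 (e11: 'a) (e12: 'a) (e21: 'a) (e22: 'a)

lemma m2_eqI: "e11 A = e11 B \<Longrightarrow> e12 A = e12 B \<Longrightarrow> e21 A = e21 B \<Longrightarrow> e22 A = e22 B \<Longrightarrow> A = B"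
  by (cases A; cases B) auto

instantiation m2 :: (comm_ring_1) ring_1
begin
definition zero_m2 where "0 = M2 0 0 0 0"
definition one_m2 where "1 = M2 1 0 0 1"
definition plus_m2 where "A + B = M2 (e11 A + e11 B) (e12 A + e12 B) (e21 A + e21 B) (e22 A + e22 B)"
definition minus_m2 where "A - B = M2 (e11 A - e11 B) (e12 A - e12 B) (e21 A - e21 B) (e22 A - e22 B)"
definition uminus_m2 where "- A = M2 (- e11 A) (- e12 A) (- e21 A) (- e22 A)"
definition times_m2 where "A * B = M2 (e11 A * e11 B + e12 A * e21 B) (e11 A * e12 B + e12 A * e22 B)
   (e21 A * e11 B + e22 A * e21 B) (e21 A * e12 B + e22 A * e22 B)"
instance
  by standard (auto intro!: m2_eqI simp: zero_m2_def one_m2_def plus_m2_def minus_m2_def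
      uminus_m2_def times_m2_def algebra_simps)
end

lemma m2_simps [simp]:
  "e11 0 = 0" "e12 0 = 0" "e21 0 = 0" "e22 0 = 0"
  "e11 1 = 1" "e12 1 = 0" "e21 1 = 0" "e22 1 = 1"
  "e11 (A + B) = e11 A + e11 B" "e12 (A + B) = e12 A + e12 B"
  "e21 (A + B) = e21 A + e21 B" "e22 (A + B) = e22 A + e22 B"
  "e11 (A - B) = e11 A - e11 B" "e12 (A - B) = e12 A - e12 B"
  "e21 (A - B) = e21 A - e21 B" "e22 (A - B) = e22 A - e22 B"
  "e11 (- A) = - e11 A" "e12 (- A) = - e12 A" "e21 (- A) = - e21 A" "e22 (- A) = - e22 A"
  "e11 (A * B) = e11 A * e11 B + e12 A * e21 B" "e12 (A * B) = e11 A * e12 B + e12 A * e22 B"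
  "e21 (A * B) = e21 A * e11 B + e22 A * e21 B" "e22 (A * B) = e21 A * e12 B + e22 A * e22 B"
  for A B :: "'a::comm_ring_1 m2"
  by (simp_all add: zero_m2_def one_m2_def plus_m2_def minus_m2_def uminus_m2_def times_m2_def)

definition trace :: "'a::comm_ring_1 m2 \<Rightarrow> 'a" where
  "trace A = e11 A + e22 A"

definition scalar :: "'a::comm_ring_1 \<Rightarrow> 'a m2" where
  "scalar c = M2 c 0 0 c"

lemma scalar_simps [simp]:
  "e11 (scalar c) = c" "e12 (scalar c) = 0" "e21 (scalar c) = 0" "e22 (scalar c) = c"
  by (simp_all add: scalar_def)

lemma trace_add [simp]: "trace (A + B) = trace A + trace B"
  by (simp add: trace_def)

lemma trace_sum: "trace (sum f S) = (\<Sum>x\<in>S. trace (f x))"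
  by (induction S rule: infinite_finite_induct) (auto simp: trace_def)

lemma trace_mult_commute: "trace (A * B) = trace (B * A)"
  by (simp add: trace_def algebra_simps)

lemma trace_scalar_mult [simp]: "trace (scalar c * A) = c * trace A"
  by (simp add: trace_def algebra_simps)

lemma scalar_mult_commute: "scalar c * A = A * scalar c"
  by (rule m2_eqI) (simp_all add: mult.commute)

lemma scalar_0 [simp]: "scalar 0 = 0"
  by (rule m2_eqI) simp_all

lemma scalar_1 [simp]: "scalar 1 = 1"
  by (rule m2_eqI) simp_all

lemma scalar_add: "scalar (a + b) = scalar a + scalar b"
  by (rule m2_eqI) simp_all

lemma scalar_mult: "scalar (a * b) = scalar a * scalar b"
  by (rule m2_eqI) simp_all

lemma scalar_power: "scalar (c ^ n) = scalar c ^ n"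
  by (induction n) (simp_all add: scalar_mult)

lemma of_nat_m2: "of_nat n = scalar (of_nat n)"
  by (induction n) (simp_all add: scalar_add)

text \<open>Write M = c + M0 with M0 trace-free: then M0^2 is scalar, so the odd power M0^p is again
  trace-free, and M^p = c^p + M0^p by the Frobenius identity for commuting elements.\<close>
lemma trace_power_prime:
  fixes M :: "'a::comm_ring_1 m2"
  assumes "prime p" "of_nat p = (0::'a)" "odd p" "2 * h = (1::'a)"
  shows "trace (M ^ p) = trace M ^ p"
proof -
  define c where "c = h * trace M"
  define M0 where "M0 = M - scalar c"
  have trace_M: "trace M = 2 * c" using assms(4) by (simp add: c_def mult.assoc[symmetric])
  have trace_M0: "e22 M0 = - e11 M0" using trace_M by (simp add: M0_def trace_def algebra_simps)
  define e where "e = e11 M0 * e11 M0 + e12 M0 * e21 M0"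
  have square_M0: "M0 * M0 = scalar e"
    by (rule m2_eqI) (simp_all add: trace_M0 e_def algebra_simps)
  have odd_power_M0: "M0 ^ Suc (2 * j) = scalar (e ^ j) * M0" for j
  proof (induction j)
    case (Suc j)
    have "M0 ^ Suc (2 * Suc j) = (M0 * M0) * M0 ^ Suc (2 * j)" by (simp add: mult.assoc)
    also have "\<dots> = scalar e * scalar (e ^ j) * M0" by (simp only: square_M0 Suc.IH mult.assoc)
    finally show ?case by (simp flip: scalar_mult)
  qed simp
  obtain j where "p = Suc (2 * j)" using assms(3) by (metis oddE Suc_eq_plus1)
  hence "trace (M0 ^ p) = 0" by (simp only: odd_power_M0) (simp add: trace_def trace_M0)
  have "M ^ p = scalar c ^ p + M0 ^ p"
    using add_power_prime_char_commuting[OF assms(1) _ scalar_mult_commute, of c M0] assms(2)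
    by (simp add: M0_def of_nat_m2)
  hence "trace (M ^ p) = 2 * c ^ p"
    using \<open>trace (M0 ^ p) = 0\<close> by (simp add: trace_def flip: scalar_power)
  also have "\<dots> = (2 * c) ^ p"
    using add_power_prime_char[OF assms(1,2), of 1 1] by (simp add: power_mult_distrib)
  finally show ?thesis by (simp add: trace_M)
qed

fun prod_desc :: "(nat \<Rightarrow> 'a::monoid_mult) \<Rightarrow> nat \<Rightarrow> 'a" where
  "prod_desc F 0 = 1"
| "prod_desc F (Suc n) = F n * prod_desc F n"

lemma prod_desc_cong: "(\<And>i. i < n \<Longrightarrow> F i = G i) \<Longrightarrow> prod_desc F n = prod_desc G n"
  by (induction n) auto

lemma prod_desc_Suc_shift: "prod_desc (\<lambda>i. F (Suc i)) n * F 0 = prod_desc F (Suc n)"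
  by (induction n) (simp_all add: mult.assoc)

lemma prod_desc_conj:
  assumes "W * W' = 1" "W' * W = 1"
  shows "prod_desc (\<lambda>i. W * F i * W') n = W * prod_desc F n * W'"
proof (induction n)
  case (Suc n)
  have "prod_desc (\<lambda>i. W * F i * W') (Suc n) = W * F n * (W' * W) * prod_desc F n * W'"
    by (simp only: prod_desc.simps Suc.IH) (simp only: mult.assoc)
  thus ?case using assms(2) by (simp add: mult.assoc)
qed (simp add: assms(1))

lemma trace_prod_desc_shift:
  fixes F :: "nat \<Rightarrow> 'a::comm_ring_1 m2"
  assumes "F n = F 0"
  shows "trace (prod_desc (\<lambda>i. F (Suc i)) n) = trace (prod_desc F n)"
proof (cases n)
  case (Suc m)
  have "trace (prod_desc (\<lambda>i. F (Suc i)) n) = trace (F 0 * prod_desc (\<lambda>i. F (Suc i)) m)"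
    using assms Suc by simp
  also have "\<dots> = trace (prod_desc (\<lambda>i. F (Suc i)) m * F 0)" by (rule trace_mult_commute)
  finally show ?thesis by (simp add: prod_desc_Suc_shift Suc)
qed simp

text \<open>X(-1) wraps around to X(p - 1) because p = 0 in the coefficient ring.\<close>
lemma trace_prod_desc_regroup:
  fixes X Y :: "'a::comm_ring_1 \<Rightarrow> 'a m2"
  assumes "of_nat p = (0::'a)"
  shows "trace (prod_desc (\<lambda>i. X (of_nat i) * Y (of_nat i)) p)
       = trace (prod_desc (\<lambda>i. Y (of_nat i) * X (of_nat i - 1)) p)"
proof (cases p)
  case (Suc m)
  have regroup: "prod_desc (\<lambda>i. Y (of_nat i) * X (of_nat i - 1)) (Suc n)
      = Y (of_nat n) * prod_desc (\<lambda>i. X (of_nat i) * Y (of_nat i)) n * X (-1)" for n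
    by (induction n) (simp_all add: mult.assoc)
  have m: "(of_nat m :: 'a) = -1" using assms Suc by (simp add: eq_neg_iff_add_eq_0 add.commute)
  have "trace (prod_desc (\<lambda>i. Y (of_nat i) * X (of_nat i - 1)) p)
      = trace ((Y (of_nat m) * prod_desc (\<lambda>i. X (of_nat i) * Y (of_nat i)) m) * X (-1))"
    by (simp only: Suc regroup)
  also have "\<dots> = trace (X (-1) * Y (of_nat m) * prod_desc (\<lambda>i. X (of_nat i) * Y (of_nat i)) m)"
    by (subst trace_mult_commute) (simp only: mult.assoc)
  finally show ?thesis by (simp add: Suc m)
qed simp

lemma map_m2_mult:
  fixes f :: "'a::comm_ring_1 \<Rightarrow> 'b::comm_ring_1"
  assumes "\<And>a b. f (a + b) = f a + f b" "\<And>a b. f (a * b) = f a * f b"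
  shows "map_m2 f (A * B) = map_m2 f A * map_m2 f B"
  by (rule m2_eqI) (simp_all add: assms m2.map_sel)

lemma map_m2_prod_desc:
  fixes f :: "'a::comm_ring_1 \<Rightarrow> 'b::comm_ring_1"
  assumes "\<And>a b. f (a + b) = f a + f b" "\<And>a b. f (a * b) = f a * f b" "f 0 = 0" "f 1 = 1"
  shows "map_m2 f (prod_desc F n) = prod_desc (\<lambda>i. map_m2 f (F i)) n"
proof (induction n)
  case 0
  show ?case by (rule m2_eqI) (simp_all add: assms m2.map_sel)
qed (simp add: map_m2_mult[OF assms(1,2)])

lemma trace_map_m2:
  assumes "\<And>a b. f (a + b) = f a + f b"
  shows "trace (map_m2 f A) = f (trace A)"
  by (simp add: trace_def assms m2.map_sel)

section \<open>Weighted degrees\<close>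

text \<open>Weighted degrees in which X has weight 2, so wdeg_le q m says 2 deg q \<le> m. A matrix has
  weight n if its (i,j) entry has weight at most n + i - j; then [a 1; b+X 0] has weight 1 and
  [0 0; 1 0] has weight -1.\<close>

definition wdeg_le :: "'a::zero poly \<Rightarrow> int \<Rightarrow> bool" where
  "wdeg_le q m \<longleftrightarrow> (\<forall>k. m < 2 * int k \<longrightarrow> coeff q k = 0)"

lemma wdeg_le_zero [simp]: "wdeg_le 0 m"
  by (simp add: wdeg_le_def)

lemma wdeg_le_mono: "wdeg_le q m \<Longrightarrow> m \<le> n \<Longrightarrow> wdeg_le q n"
  by (auto simp: wdeg_le_def)

lemma wdeg_le_add: "wdeg_le q m \<Longrightarrow> wdeg_le r m \<Longrightarrow> wdeg_le (q + r) m"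
  by (auto simp: wdeg_le_def)

lemma wdeg_le_const: "0 \<le> m \<Longrightarrow> wdeg_le [:a:] m"
  by (auto simp: wdeg_le_def coeff_pCons split: nat.splits)

lemma wdeg_le_linear: "2 \<le> m \<Longrightarrow> wdeg_le [:b, a:] m"
  by (auto simp: wdeg_le_def coeff_pCons split: nat.splits)

lemma wdeg_le_mult:
  fixes q r :: "'a::comm_semiring_0 poly"
  assumes "wdeg_le q m" "wdeg_le r n"
  shows "wdeg_le (q * r) (m + n)"
  unfolding wdeg_le_def
proof (intro allI impI)
  fix k assume k: "m + n < 2 * int k"
  have "coeff q i * coeff r (k - i) = 0" if "i \<le> k" for i
    using assms k that by (cases "m < 2 * int i") (auto simp: wdeg_le_def of_nat_diff)
  thus "coeff (q * r) k = 0" by (simp add: coeff_mult)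
qed

definition wdeg_m2 :: "int \<Rightarrow> 'a::comm_ring_1 poly m2 \<Rightarrow> bool" where
  "wdeg_m2 n A \<longleftrightarrow> wdeg_le (e11 A) n \<and> wdeg_le (e12 A) (n - 1) \<and> wdeg_le (e21 A) (n + 1)
     \<and> wdeg_le (e22 A) n"

lemma wdeg_m2_mult:
  assumes "wdeg_m2 n A" "wdeg_m2 m B"
  shows "wdeg_m2 (n + m) (A * B)"
proof -
  have "wdeg_le (x * y) c" if "wdeg_le x a" "wdeg_le y b" "a + b \<le> c" for x y :: "'a poly" and a b c
    using wdeg_le_mono[OF wdeg_le_mult] that by blast
  thus ?thesis using assms unfolding wdeg_m2_def by (auto intro!: wdeg_le_add)
qed

lemma wdeg_m2_add: "wdeg_m2 n A \<Longrightarrow> wdeg_m2 n B \<Longrightarrow> wdeg_m2 n (A + B)"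
  by (simp add: wdeg_m2_def wdeg_le_add)

lemma wdeg_m2_scalar: "wdeg_m2 0 (scalar [:c:])"
  by (auto simp: wdeg_m2_def wdeg_le_def coeff_pCons split: nat.splits)

lemma wdeg_m2_prod_desc:
  "(\<And>i. i < n \<Longrightarrow> wdeg_m2 k (F i)) \<Longrightarrow> wdeg_m2 (k * int n) (prod_desc F n)"
proof (induction n)
  case 0
  show ?case using wdeg_m2_scalar[of 1] by (simp flip: one_pCons)
next
  case (Suc n)
  have "wdeg_m2 (k + k * int n) (F n * prod_desc F n)"
    using Suc by (intro wdeg_m2_mult) auto
  thus ?case by (simp add: algebra_simps)
qed

lemma wdeg_le_trace: "wdeg_m2 n A \<Longrightarrow> wdeg_le (trace A) n"
  by (simp add: wdeg_m2_def trace_def wdeg_le_add)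

section \<open>Words and rotation classes\<close>

definition words :: "nat set \<Rightarrow> nat \<Rightarrow> nat list set" where
  "words C n = {d. length d = n \<and> set d \<subseteq> C}"

definition word_prod :: "(nat \<Rightarrow> 'b::monoid_mult) \<Rightarrow> nat list \<Rightarrow> 'b" where
  "word_prod H d = prod_list (rev (map H d))"

definition word_weight :: "nat list \<Rightarrow> 'a::comm_ring_1" where
  "word_weight d = (\<Prod>i<length d. of_nat i ^ (d ! i))"

lemma finite_words: "finite C \<Longrightarrow> finite (words C n)"
proof -
  have "words C n = {xs. set xs \<subseteq> C \<and> length xs = n}" by (auto simp: words_def)
  thus "finite C \<Longrightarrow> finite (words C n)" by (simp add: finite_lists_length_eq)
qed

lemma words_Suc: "words C (Suc m) = (\<lambda>(d, c). d @ [c]) ` (words C m \<times> C)"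
proof (intro set_eqI iffI)
  fix e assume "e \<in> words C (Suc m)"
  moreover from this obtain d c where "e = d @ [c]"
    by (cases e rule: rev_cases) (auto simp: words_def)
  ultimately show "e \<in> (\<lambda>(d, c). d @ [c]) ` (words C m \<times> C)"
    by (auto simp: words_def image_iff)
qed (auto simp: words_def)

lemma word_prod_Cons: "word_prod H (x # ys) = word_prod H ys * H x"
  by (simp add: word_prod_def)

lemma word_prod_snoc: "word_prod H (ys @ [x]) = H x * word_prod H ys"
  by (simp add: word_prod_def)

lemma trace_word_prod_rotate1: "trace (word_prod H (rotate1 d)) = trace (word_prod H d)"
  by (cases d) (simp_all add: word_prod_Cons word_prod_snoc trace_mult_commute)

lemma prod_desc_sum_expand:
  fixes H :: "nat \<Rightarrow> 'a::comm_ring_1 m2" and z :: "nat \<Rightarrow> 'a"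
  assumes "finite C"
  shows "prod_desc (\<lambda>n. \<Sum>c\<in>C. scalar (z n ^ c) * H c) m
       = (\<Sum>d\<in>words C m. scalar (\<Prod>i<m. z i ^ (d ! i)) * word_prod H d)"
proof (induction m)
  case 0
  have "words C 0 = {[]}" by (auto simp: words_def)
  thus ?case by (simp add: word_prod_def)
next
  case (Suc m)
  have inj: "inj_on (\<lambda>(d, c). d @ [c]) (words C m \<times> C)" by (auto simp: inj_on_def)
  have snoc_term: "scalar (\<Prod>i<Suc m. z i ^ ((d @ [c]) ! i)) * word_prod H (d @ [c])
      = scalar (z m ^ c) * H c * (scalar (\<Prod>i<m. z i ^ (d ! i)) * word_prod H d)"
    if "d \<in> words C m" for d c
  proof -
    let ?P = "\<Prod>i<m. z i ^ (d ! i)"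
    have "length d = m" using that by (simp add: words_def)
    hence "(\<Prod>i<Suc m. z i ^ ((d @ [c]) ! i)) = z m ^ c * ?P"
      by (simp add: nth_append)
    moreover have "scalar ?P * (H c * word_prod H d) = H c * (scalar ?P * word_prod H d)"
      by (simp only: mult.assoc[symmetric] scalar_mult_commute[of ?P "H c"])
    ultimately show ?thesis by (simp only: word_prod_snoc scalar_mult mult.assoc)
  qed
  have "(\<Sum>e\<in>words C (Suc m). scalar (\<Prod>i<Suc m. z i ^ (e ! i)) * word_prod H e)
      = (\<Sum>(d, c)\<in>words C m \<times> C. scalar (z m ^ c) * H c
          * (scalar (\<Prod>i<m. z i ^ (d ! i)) * word_prod H d))"
    by (rule sum.reindex_cong[OF inj words_Suc]) (auto simp: snoc_term simp del: prod.lessThan_Suc)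
  also have "\<dots> = (\<Sum>d\<in>words C m. \<Sum>c\<in>C. scalar (z m ^ c) * H c
          * (scalar (\<Prod>i<m. z i ^ (d ! i)) * word_prod H d))"
    by (rule sum.cartesian_product[symmetric])
  also have "\<dots> = prod_desc (\<lambda>n. \<Sum>c\<in>C. scalar (z n ^ c) * H c) (Suc m)"
    by (simp only: prod_desc.simps Suc.IH sum_distrib_left sum_distrib_right)
  finally show ?case ..
qed

lemma sum_list_rotate: "sum_list (rotate r d) = sum_list (d :: nat list)"
proof -
  have "sum_list (rotate1 xs) = sum_list xs" for xs :: "nat list" by (cases xs) simp_all
  thus ?thesis by (induction r) simp_all
qed

lemma bij_betw_add_mod: "0 < (p::nat) \<Longrightarrow> bij_betw (\<lambda>i. (r + i) mod p) {..<p} {..<p}"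
proof -
  assume p: "0 < p"
  have "inj_on (\<lambda>i. (r + i) mod p) {..<p}"
  proof (rule inj_onI)
    fix x y assume xy: "x \<in> {..<p}" "y \<in> {..<p}" and "(r + x) mod p = (r + y) mod p"
    hence "[r + x = r + y] (mod p)" by (simp only: cong_def)
    hence "[x = y] (mod p)" by (simp only: cong_add_lcancel_nat)
    thus "x = y" using xy by (auto intro: cong_less_modulus_unique_nat)
  qed
  moreover have "(\<lambda>i. (r + i) mod p) ` {..<p} \<subseteq> {..<p}" using p by auto
  ultimately show ?thesis by (simp add: bij_betw_def endo_inj_surj)
qed

lemma of_nat_rotate_index:
  assumes "of_nat p = (0::'a::comm_ring_1)"
  shows "(of_nat i :: 'a) = of_nat ((r + i) mod p) - of_nat r"
  by (simp add: of_nat_mod_eq[OF assms])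

text \<open>Rotating a word d of length p by r is a shift by -r in the index ring \<open>\<int>/p\<close>; so the
  centroid of the letters, weighted by d, moves by -r.\<close>
definition centroid :: "nat list \<Rightarrow> 'a::field" where
  "centroid d = of_nat (\<Sum>i<length d. d ! i * i) / of_nat (sum_list d)"

lemma centroid_rotate:
  assumes "of_nat p = (0::'a::field)" "length d = p" "of_nat (sum_list d) \<noteq> (0::'a)"
  shows "(centroid (rotate r d) :: 'a) = centroid d - of_nat r"
proof -
  have p: "0 < p" using assms(2,3) by (cases d) auto
  have "(of_nat (\<Sum>i<p. rotate r d ! i * i) :: 'a)
      = (\<Sum>i<p. of_nat (d ! ((r + i) mod p)) * (of_nat ((r + i) mod p) - of_nat r))"
    using assms(2) by (simp add: nth_rotate flip: of_nat_rotate_index[OF assms(1)])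
  also have "\<dots> = (\<Sum>j<p. of_nat (d ! j) * (of_nat j - of_nat r))"
    by (rule sum.reindex_bij_betw[OF bij_betw_add_mod[OF p]])
  also have "\<dots> = of_nat (\<Sum>j<p. d ! j * j) - of_nat r * of_nat (sum_list d)"
    using assms(2)
    by (simp add: sum_list_sum_nth atLeast0LessThan algebra_simps sum_subtractf sum_distrib_left)
  finally show ?thesis
    using assms by (simp add: centroid_def sum_list_rotate field_simps)
qed

lemma word_weight_rotate:
  assumes "of_nat p = (0::'a::comm_ring_1)" "length d = p"
  shows "(word_weight (rotate r d) :: 'a) = poly (\<Prod>j<p. [:of_nat j, -1:] ^ (d ! j)) (of_nat r)"
proof (cases "p = 0")
  case False
  have "(word_weight (rotate r d) :: 'a)
      = (\<Prod>i<p. (of_nat ((r + i) mod p) - of_nat r) ^ (d ! ((r + i) mod p)))"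
    using assms(2) by (simp add: word_weight_def nth_rotate flip: of_nat_rotate_index[OF assms(1)])
  also have "\<dots> = (\<Prod>j<p. (of_nat j - of_nat r) ^ (d ! j))"
    using False by (intro prod.reindex_bij_betw bij_betw_add_mod) simp
  finally show ?thesis by (simp add: poly_prod)
qed (use assms in \<open>simp add: word_weight_def\<close>)

lemma sum_word_weight_rotate_eq_0:
  assumes "prime p" "of_nat p = (0::'a::idom)" "length d = p" "sum_list d < p - 1"
  shows "(\<Sum>r<p. word_weight (rotate r d) :: 'a) = 0"
proof -
  let ?h = "\<Prod>j<p. [:of_nat j, -1:] ^ (d ! j) :: 'a poly"
  have "degree ?h \<le> (\<Sum>j<p. degree ([:of_nat j, -1:] ^ (d ! j) :: 'a poly))"
    by (rule order.trans[OF degree_prod_sum_le]) simp_all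
  also have "\<dots> \<le> (\<Sum>j<p. d ! j)"
    by (intro sum_mono order.trans[OF degree_power_le]) simp
  also have "\<dots> = sum_list d"
    using assms(3) by (simp add: sum_list_sum_nth atLeast0LessThan)
  finally have "degree ?h < p - 1" using assms(4) by linarith
  thus ?thesis
    using sum_poly_of_nat_eq_0[OF assms(1,2)] by (simp add: word_weight_rotate[OF assms(2,3)])
qed

lemma bij_betw_rotate_zeros:
  fixes \<theta> :: "'b list \<Rightarrow> 'a::ring_1"
  assumes "prime p" "of_nat p = (0::'a)"
    and len: "\<And>d. d \<in> E \<Longrightarrow> length d = p"
    and closed: "\<And>d r. d \<in> E \<Longrightarrow> rotate r d \<in> E"
    and \<theta>_rotate: "\<And>d r. d \<in> E \<Longrightarrow> r < p \<Longrightarrow> \<theta> (rotate r d) = \<theta> d - of_nat r"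
    and \<theta>_range: "\<And>d. d \<in> E \<Longrightarrow> \<exists>r<p. \<theta> d = of_nat r"
  shows "bij_betw (\<lambda>(r, d). rotate r d) ({..<p} \<times> {d \<in> E. \<theta> d = 0}) E"
proof (rule bij_betw_imageI)
  have p: "0 < p" using assms(1) prime_gt_0_nat by blast
  have unrotate: "rotate ((p - r) mod p) (rotate r d) = d" if "d \<in> E" "r < p" for d r
  proof -
    have "((p - r) mod p + r) mod p = 0"
      using that(2) by (metis le_add_diff_inverse2 less_imp_le mod_add_left_eq mod_self)
    thus ?thesis using len[OF that(1)] by (simp add: rotate_rotate)
  qed
  show "inj_on (\<lambda>(r, d). rotate r d) ({..<p} \<times> {d \<in> E. \<theta> d = 0})"
  proof (rule inj_onI, clarsimp)
    fix r d r' d'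
    assume r: "r < p" "r' < p" and d: "d \<in> E" "\<theta> d = 0" "d' \<in> E" "\<theta> d' = 0"
      and eq: "rotate r d = rotate r' d'"
    have "(of_nat r :: 'a) = of_nat r'"
      using \<theta>_rotate[of d r] \<theta>_rotate[of d' r'] r d eq by simp
    hence "r = r'" using of_nat_inj_below_prime[OF assms(1,2) r] by blast
    thus "r = r' \<and> d = d'" using unrotate[of d r] unrotate[of d' r'] r d eq by metis
  qed
  show "(\<lambda>(r, d). rotate r d) ` ({..<p} \<times> {d \<in> E. \<theta> d = 0}) = E"
  proof (intro set_eqI iffI)
    fix e assume e: "e \<in> E"
    then obtain r where r: "r < p" "\<theta> e = of_nat r" using \<theta>_range by blast
    hence "rotate r e \<in> {d \<in> E. \<theta> d = 0}" using e closed \<theta>_rotate by simp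
    moreover have "(p - r) mod p < p" using p by simp
    ultimately show "e \<in> (\<lambda>(r, d). rotate r d) ` ({..<p} \<times> {d \<in> E. \<theta> d = 0})"
      using unrotate[OF e r(1)] by force
  qed (auto intro: closed)
qed

lemma sum_rotation_classes:
  assumes "bij_betw (\<lambda>(r, d). rotate r d) ({..<p} \<times> E0) E" "\<And>r d. c (rotate r d) = c d"
  shows "(\<Sum>d\<in>E. f d * c d) = (\<Sum>d\<in>E0. c d * (\<Sum>r<p. f (rotate r d)) :: 'a::comm_semiring_0)"
proof -
  have "(\<Sum>d\<in>E. f d * c d) = (\<Sum>(r, d)\<in>{..<p} \<times> E0. f (rotate r d) * c d)"
    by (simp add: sum.reindex_bij_betw[OF assms(1), symmetric] case_prod_unfold assms(2))
  also have "\<dots> = (\<Sum>d\<in>E0. \<Sum>r<p. f (rotate r d) * c d)"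
    unfolding sum.cartesian_product[symmetric] by (rule sum.swap)
  finally show ?thesis by (simp add: sum_distrib_left mult.commute)
qed

text \<open>Words of weight 0 < s \<le> p/2 fall into rotation classes of size p, along which the weights
  sum to 0: they are the values of a polynomial of degree s < p - 1 at all points of \<open>\<int>/p\<close>.\<close>
lemma sum_light_words_eq_0:
  fixes c :: "nat list \<Rightarrow> 'a::field"
  assumes "prime p" "of_nat p = (0::'a)" "odd p" "finite C"
    and rot: "\<And>d. c (rotate1 d) = c d"
  shows "(\<Sum>d\<in>{d \<in> words C p. 0 < sum_list d \<and> 2 * sum_list d \<le> p}. word_weight d * c d) = 0"
proof -
  define E where "E = {d \<in> words C p. 0 < sum_list d \<and> 2 * sum_list d \<le> p}"
  define E0 where "E0 = {d \<in> E. (centroid d :: 'a) = 0}"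
  have "2 \<le> p" "p \<noteq> 2" using assms(1,3) prime_ge_2_nat by auto
  hence p3: "3 \<le> p" by linarith
  have len: "length d = p" if "d \<in> E" for d using that by (simp add: E_def words_def)
  have closed: "rotate r d \<in> E" if "d \<in> E" for d r
    using that by (simp add: E_def words_def sum_list_rotate)
  have nz: "of_nat (sum_list d) \<noteq> (0::'a)" if "d \<in> E" for d
    using that p3 of_nat_eq_0_iff_prime_dvd[OF assms(1,2), of "sum_list d"]
    by (auto simp: E_def dest: dvd_imp_le)
  have bij: "bij_betw (\<lambda>(r, d). rotate r d) ({..<p} \<times> E0) E"
    unfolding E0_def
  proof (rule bij_betw_rotate_zeros[OF assms(1,2) len closed])
    fix d r assume "d \<in> E"
    thus "(centroid (rotate r d) :: 'a) = centroid d - of_nat r"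
      by (intro centroid_rotate[OF assms(2)] len nz)
  next
    fix d assume "d \<in> E"
    thus "\<exists>r<p. (centroid d :: 'a) = of_nat r"
      unfolding centroid_def by (intro of_nat_divide_in_prime_field[OF assms(1,2)] nz)
  qed
  have "c (rotate r d) = c d" for r d by (induction r) (simp_all add: rot)
  hence "(\<Sum>d\<in>E. word_weight d * c d) = (\<Sum>d\<in>E0. c d * (\<Sum>r<p. word_weight (rotate r d)))"
    by (rule sum_rotation_classes[OF bij])
  also have "\<dots> = 0"
  proof (intro sum.neutral ballI)
    fix d assume "d \<in> E0"
    hence "length d = p" "sum_list d < p - 1" using p3 by (auto simp: E0_def E_def words_def)
    thus "c d * (\<Sum>r<p. word_weight (rotate r d)) = 0"
      by (simp add: sum_word_weight_rotate_eq_0[OF assms(1,2)])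
  qed
  finally show ?thesis by (simp add: E_def)
qed

lemma sum_weighted_words:
  fixes c :: "nat list \<Rightarrow> 'a::field"
  assumes "prime p" "of_nat p = (0::'a)" "odd p"
    and rot: "\<And>d. c (rotate1 d) = c d"
    and heavy: "\<And>d. d \<in> words {0, 1, 2} p \<Longrightarrow> p < 2 * sum_list d \<Longrightarrow> c d = 0"
  shows "(\<Sum>d\<in>words {0, 1, 2} p. word_weight d * c d) = c (replicate p 0)"
proof -
  let ?W = "words {0, 1, 2} p"
  define E where "E = {d \<in> ?W. 0 < sum_list d \<and> 2 * sum_list d \<le> p}"
  define B where "B = {d \<in> ?W. p < 2 * sum_list d}"
  have zero: "{d \<in> ?W. sum_list d = 0} = {replicate p 0}"
  proof (intro set_eqI iffI)
    fix d assume "d \<in> {d \<in> ?W. sum_list d = 0}"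
    hence "length d = p" "\<forall>x\<in>set d. x = 0" by (simp_all add: words_def)
    thus "d \<in> {replicate p 0}" using replicate_length_same[of d 0] by simp
  qed (simp add: words_def sum_list_replicate set_replicate_conv_if)
  have "?W = {d \<in> ?W. sum_list d = 0} \<union> (E \<union> B)"
    by (auto simp: E_def B_def simp del: sum_list_eq_0_iff)
  hence split: "?W = {replicate p 0} \<union> (E \<union> B)" by (simp only: zero)
  have "finite E" "finite B" using finite_words[of "{0, 1, 2}" p] by (auto simp: E_def B_def)
  moreover have "replicate p 0 \<notin> E \<union> B" "E \<inter> B = {}"
    by (auto simp: E_def B_def sum_list_replicate)
  ultimately have "(\<Sum>d\<in>?W. word_weight d * c d)
      = word_weight (replicate p 0) * c (replicate p 0) + (\<Sum>d\<in>E. word_weight d * c d)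
        + (\<Sum>d\<in>B. word_weight d * c d)"
    by (subst split) (simp add: sum.union_disjoint)
  also have "(\<Sum>d\<in>E. word_weight d * c d) = 0"
    unfolding E_def using sum_light_words_eq_0[OF assms(1-3), of "{0, 1, 2}" c] rot by simp
  also have "(\<Sum>d\<in>B. word_weight d * c d) = 0" by (simp add: B_def heavy)
  finally show ?thesis by (simp add: word_weight_def)
qed

section \<open>The trace J and its shift formula\<close>

definition emat :: "'a::comm_ring_1 \<Rightarrow> 'a \<Rightarrow> 'a m2" where
  "emat a w = M2 a 1 w 0"

definition block :: "'a::comm_ring_1 \<Rightarrow> 'a \<Rightarrow> 'a \<Rightarrow> 'a \<Rightarrow> 'a \<Rightarrow> 'a \<Rightarrow> 'a \<Rightarrow> 'a m2" where
  "block a1 a2 a3 b1 b2 b3 z = emat a1 (z + b1) * emat a2 (z + b2) * emat a3 (z + b3)"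

definition Jtrace :: "nat \<Rightarrow> 'a::comm_ring_1 \<Rightarrow> 'a \<Rightarrow> 'a \<Rightarrow> 'a \<Rightarrow> 'a \<Rightarrow> 'a \<Rightarrow> 'a \<Rightarrow> 'a" where
  "Jtrace p a1 a2 a3 b1 b2 b3 x = trace (prod_desc (\<lambda>n. block a1 a2 a3 b1 b2 b3 (of_nat n + x)) p)"

definition Jpoly :: "nat \<Rightarrow> 'a::comm_ring_1 \<Rightarrow> 'a \<Rightarrow> 'a \<Rightarrow> 'a \<Rightarrow> 'a \<Rightarrow> 'a \<Rightarrow> 'a poly" where
  "Jpoly p a1 a2 a3 b1 b2 b3 =
     trace (prod_desc (\<lambda>n. block [:a1:] [:a2:] [:a3:] [:b1, 1:] [:b2, 1:] [:b3, 1:] [:of_nat n:]) p)"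

lemma map_m2_emat: "f 0 = 0 \<Longrightarrow> f 1 = 1 \<Longrightarrow> map_m2 f (emat a w) = emat (f a) (f w)"
  by (simp add: emat_def)

lemma poly_Jpoly: "poly (Jpoly p a1 a2 a3 b1 b2 b3) x = Jtrace p a1 a2 a3 b1 b2 b3 x"
proof -
  let ?f = "\<lambda>q. poly q x"
  have hom: "?f (q + r) = ?f q + ?f r" "?f (q * r) = ?f q * ?f r" "?f 0 = 0" "?f 1 = 1" for q r
    by simp_all
  have "map_m2 ?f (block [:a1:] [:a2:] [:a3:] [:b1, 1:] [:b2, 1:] [:b3, 1:] [:z:])
      = block a1 a2 a3 b1 b2 b3 (z + x)" for z
    by (simp add: block_def map_m2_mult[OF hom(1,2)] map_m2_emat[OF hom(3,4)] algebra_simps)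
  thus ?thesis
    by (simp add: Jpoly_def Jtrace_def map_m2_prod_desc[OF hom] flip: trace_map_m2[OF hom(1)])
qed

lemma Jpoly_shift_invariant:
  assumes "of_nat p = (0::'a::comm_ring_1)"
  shows "pcompose (Jpoly p a1 a2 a3 b1 b2 b3) [:1, 1:] = (Jpoly p a1 a2 a3 b1 b2 b3 :: 'a poly)"
proof -
  let ?f = "\<lambda>q. pcompose q [:1::'a, 1:]"
  have hom: "?f (q + r) = ?f q + ?f r" "?f (q * r) = ?f q * ?f r" "?f 0 = 0" "?f 1 = 1" for q r
    by (simp_all add: pcompose_add pcompose_mult pcompose_1)
  define F where "F = (\<lambda>n. block [:a1:] [:a2:] [:a3:] [:b1, 1:] [:b2, 1:] [:b3, 1::'a:] [:of_nat n:])"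
  have "map_m2 ?f (F n) = F (Suc n)" for n
    by (simp add: F_def block_def map_m2_mult[OF hom(1,2)] map_m2_emat[OF hom(3,4)] pcompose_pCons
        add_ac)
  hence "?f (Jpoly p a1 a2 a3 b1 b2 b3) = trace (prod_desc (\<lambda>n. F (Suc n)) p)"
    by (simp add: Jpoly_def map_m2_prod_desc[OF hom] flip: F_def trace_map_m2[OF hom(1)])
  also have "\<dots> = trace (prod_desc F p)"
    by (rule trace_prod_desc_shift) (simp add: F_def assms)
  finally show ?thesis by (simp add: Jpoly_def F_def)
qed

definition nilp :: "'a::comm_ring_1 m2" where
  "nilp = M2 0 0 1 0"

text \<open>The coefficients of the block as a polynomial in z; they come from
  emat a (z + b) = emat a b + z nilp and nilp * nilp = 0, nilp * emat a b * nilp = nilp.\<close>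
definition block_coeff :: "'a::comm_ring_1 \<Rightarrow> 'a \<Rightarrow> 'a \<Rightarrow> 'a \<Rightarrow> 'a \<Rightarrow> 'a \<Rightarrow> nat \<Rightarrow> 'a m2" where
  "block_coeff a1 a2 a3 b1 b2 b3 c =
    (if c = 0 then emat a1 b1 * emat a2 b2 * emat a3 b3
     else if c = 1 then nilp * emat a2 b2 * emat a3 b3 + emat a1 b1 * nilp * emat a3 b3
       + emat a1 b1 * emat a2 b2 * nilp
     else nilp)"

lemma block_expand:
  "block a1 a2 a3 b1 b2 b3 z = (\<Sum>c\<in>{0, 1, 2}. scalar (z ^ c) * block_coeff a1 a2 a3 b1 b2 b3 c)"
  by (rule m2_eqI)
    (simp_all add: block_def emat_def block_coeff_def nilp_def algebra_simps power2_eq_square)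

lemma coeff_Jpoly:
  "coeff (Jpoly p a1 a2 a3 b1 b2 b3) k = (\<Sum>d\<in>words {0, 1, 2} p. word_weight d
      * coeff (trace (word_prod (block_coeff [:a1:] [:a2:] [:a3:] [:b1, 1:] [:b2, 1:] [:b3, 1:]) d)) k)"
proof -
  have const: "(\<Prod>i\<in>S. [:f i:]) = [:\<Prod>i\<in>S. f i:]" for S and f :: "nat \<Rightarrow> 'a"
    by (induction S rule: infinite_finite_induct) (simp_all add: one_pCons mult.commute)
  have weight: "(\<Prod>i<p. [:of_nat i:] ^ (d ! i)) = [:word_weight d :: 'a:]" if "d \<in> words {0, 1, 2} p" for d
  proof -
    have "(\<Prod>i<p. [:of_nat i:] ^ (d ! i)) = [:\<Prod>i<p. of_nat i ^ (d ! i) :: 'a:]"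
      by (simp only: poly_const_pow const)
    thus ?thesis using that by (simp add: word_weight_def words_def)
  qed
  let ?H = "block_coeff [:a1:] [:a2:] [:a3:] [:b1, 1:] [:b2, 1:] [:b3, 1:]"
  have "Jpoly p a1 a2 a3 b1 b2 b3
      = trace (prod_desc (\<lambda>n. \<Sum>c\<in>{0, 1, 2}. scalar ([:of_nat n:] ^ c) * ?H c) p)"
    by (simp only: Jpoly_def block_expand)
  also have "\<dots> = trace (\<Sum>d\<in>words {0, 1, 2} p. scalar (\<Prod>i<p. [:of_nat i:] ^ (d ! i)) * word_prod ?H d)"
    by (subst prod_desc_sum_expand) simp_all
  also have "\<dots> = (\<Sum>d\<in>words {0, 1, 2} p. [:word_weight d:] * trace (word_prod ?H d))"
    unfolding trace_sum by (intro sum.cong refl) (simp add: weight)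
  finally show ?thesis by (simp add: coeff_sum)
qed

lemma wdeg_m2_emat_linear: "wdeg_m2 1 (emat [:a:] [:b, 1:])"
  by (simp add: wdeg_m2_def emat_def one_pCons wdeg_le_const wdeg_le_linear)

lemma wdeg_m2_nilp: "wdeg_m2 (-1) nilp"
  by (simp add: wdeg_m2_def nilp_def one_pCons wdeg_le_const)

lemma wdeg_m2_block_coeff:
  assumes "c \<in> {0, 1, 2}"
  shows "wdeg_m2 (3 - 2 * int c) (block_coeff [:a1:] [:a2:] [:a3:] [:b1, 1:] [:b2, 1:] [:b3, 1:] c)"
proof -
  have triple: "wdeg_m2 (n + m + k) (A * B * C)" if "wdeg_m2 n A" "wdeg_m2 m B" "wdeg_m2 k C"
    for n m k and A B C :: "'a poly m2"
    by (intro wdeg_m2_mult that)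
  note E = wdeg_m2_emat_linear and N = wdeg_m2_nilp
  show ?thesis
    using assms triple[OF E E E] triple[OF N E E] triple[OF E N E] triple[OF E E N] N
    by (auto simp: block_coeff_def intro!: wdeg_m2_add)
qed

lemma wdeg_m2_word_prod:
  assumes "\<And>c. c \<in> set d \<Longrightarrow> wdeg_m2 (k - 2 * int c) (H c)"
  shows "wdeg_m2 (k * int (length d) - 2 * int (sum_list d)) (word_prod H d)"
  using assms
proof (induction d)
  case Nil
  show ?case using wdeg_m2_scalar[of 1] by (simp add: word_prod_def flip: one_pCons)
next
  case (Cons c d)
  have "wdeg_m2 ((k * int (length d) - 2 * int (sum_list d)) + (k - 2 * int c)) (word_prod H d * H c)"
    using Cons by (intro wdeg_m2_mult) auto
  thus ?case by (simp add: word_prod_Cons algebra_simps)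
qed

lemma coeff_trace_word_prod_heavy:
  assumes "d \<in> words {0, 1, 2} p" "p < 2 * sum_list d"
  shows "coeff (trace (word_prod (block_coeff [:a1:] [:a2:] [:a3:] [:b1, 1:] [:b2, 1:] [:b3, 1:]) d)) p = 0"
proof -
  have "wdeg_le (trace (word_prod (block_coeff [:a1:] [:a2:] [:a3:] [:b1, 1:] [:b2, 1:] [:b3, 1:]) d))
      (3 * int (length d) - 2 * int (sum_list d))"
    using assms(1) by (intro wdeg_le_trace wdeg_m2_word_prod wdeg_m2_block_coeff) (auto simp: words_def)
  moreover have "3 * int (length d) - 2 * int (sum_list d) < 2 * int p"
    using assms by (simp add: words_def)
  ultimately show ?thesis by (simp add: wdeg_le_def)
qed

lemma wdeg_le_Jpoly: "wdeg_le (Jpoly p a1 a2 a3 b1 b2 b3) (3 * int p)"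
proof -
  have "wdeg_m2 3 (block [:a1:] [:a2:] [:a3:] [:b1, 1:] [:b2, 1:] [:b3, 1:] [:z:])" for z :: 'a
    using wdeg_m2_mult[OF wdeg_m2_mult[OF wdeg_m2_emat_linear wdeg_m2_emat_linear] wdeg_m2_emat_linear]
    by (simp add: block_def)
  thus ?thesis unfolding Jpoly_def by (intro wdeg_le_trace wdeg_m2_prod_desc[of p 3, simplified])
qed

lemma coeff_trace_power_block_coeff_0:
  fixes a1 a2 a3 b1 b2 b3 :: "'a::field"
  assumes "prime p" "of_nat p = (0::'a)" "odd p"
  shows "coeff (trace (block_coeff [:a1:] [:a2:] [:a3:] [:b1, 1:] [:b2, 1:] [:b3, 1:] 0 ^ p)) p
       = (a1 + a2 + a3) ^ p"
proof -
  have p0: "of_nat p = (0::'a poly)" using assms(2) by (simp add: of_nat_poly)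
  have "\<not> p dvd 2"
  proof
    assume "p dvd 2"
    hence "p = 2" using prime_ge_2_nat[OF assms(1)] by (auto dest: dvd_imp_le)
    thus False using assms(3) by simp
  qed
  hence "(2::'a) \<noteq> 0" using of_nat_eq_0_iff_prime_dvd[OF assms(1,2), of 2] by simp
  hence half: "2 * [:inverse 2:] = (1::'a poly)" by (simp add: numeral_poly one_pCons)
  let ?H0 = "block_coeff [:a1:] [:a2:] [:a3:] [:b1, 1:] [:b2, 1:] [:b3, 1:] 0"
  define u where "u = a1 * a2 * a3 + a3 * b2 + a1 * b3 + a2 * b1"
  have "trace ?H0 = [:u:] + [:a1 + a2 + a3:] * [:0, 1:]"
    by (simp add: block_coeff_def emat_def trace_def u_def algebra_simps)
  hence "trace (?H0 ^ p) = ([:u:] + [:a1 + a2 + a3:] * [:0, 1:]) ^ p"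
    by (simp add: trace_power_prime[OF assms(1) p0 assms(3) half])
  also have "\<dots> = [:u ^ p:] + [:(a1 + a2 + a3) ^ p:] * [:0, 1:] ^ p"
    by (simp only: add_power_prime_char[OF assms(1) p0] power_mult_distrib poly_const_pow)
  finally have "trace (?H0 ^ p) = [:u ^ p:] + [:(a1 + a2 + a3) ^ p:] * [:0, 1:] ^ p" .
  thus ?thesis
    using assms(1) prime_gt_0_nat coeff_linear_power[of "0::'a" p] by (simp add: coeff_pCons split: nat.splits)
qed

lemma coeff_Jpoly_prime:
  fixes a1 a2 a3 b1 b2 b3 :: "'a::field"
  assumes "prime p" "of_nat p = (0::'a)" "odd p"
  shows "coeff (Jpoly p a1 a2 a3 b1 b2 b3) p = (a1 + a2 + a3) ^ p"
proof -
  let ?H = "block_coeff [:a1:] [:a2:] [:a3:] [:b1, 1:] [:b2, 1:] [:b3, 1:]"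
  have "coeff (Jpoly p a1 a2 a3 b1 b2 b3) p
      = (\<Sum>d\<in>words {0, 1, 2} p. word_weight d * coeff (trace (word_prod ?H d)) p)"
    by (rule coeff_Jpoly)
  also have "\<dots> = coeff (trace (word_prod ?H (replicate p 0))) p"
    by (rule sum_weighted_words[OF assms])
      (simp_all add: trace_word_prod_rotate1 coeff_trace_word_prod_heavy)
  also have "word_prod ?H (replicate p 0) = ?H 0 ^ p" by (simp add: word_prod_def)
  finally show ?thesis using coeff_trace_power_block_coeff_0[OF assms] by simp
qed

lemma Jtrace_shift_odd:
  fixes a1 a2 a3 b1 b2 b3 x :: "'a::field"
  assumes "prime p" "of_nat p = (0::'a)" "odd p"
  shows "Jtrace p a1 a2 a3 b1 b2 b3 x = Jtrace p a1 a2 a3 b1 b2 b3 0 + (a1 + a2 + a3) ^ p * (x ^ p - x)"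
proof -
  let ?J = "Jpoly p a1 a2 a3 b1 b2 b3"
  have p: "0 < p" using assms(1) prime_gt_0_nat by blast
  have "coeff ?J k = 0" if "2 * p \<le> k" for k
    using wdeg_le_Jpoly[of p a1 a2 a3 b1 b2 b3] that p by (simp add: wdeg_le_def)
  hence "degree ?J \<le> 2 * p - 1" by (intro degree_le) simp
  hence "degree ?J < 2 * p" using p by linarith
  hence "?J = [:coeff ?J 0:] + smult ((a1 + a2 + a3) ^ p) (monom 1 p - monom 1 1)"
    using shift_invariant_poly_eq[OF assms(1,2) Jpoly_shift_invariant[OF assms(2)]]
    by (simp add: coeff_Jpoly_prime[OF assms])
  from arg_cong[where f = "\<lambda>q. poly q x", OF this] arg_cong[where f = "\<lambda>q. poly q 0", OF this]
  show ?thesis using p by (simp add: poly_Jpoly poly_monom)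
qed

lemma Jtrace_shift_2:
  fixes a1 a2 a3 b1 b2 b3 x :: "'a::comm_ring_1"
  assumes "(2::'a) = 0"
  shows "Jtrace 2 a1 a2 a3 b1 b2 b3 x = Jtrace 2 a1 a2 a3 b1 b2 b3 0 + (1 + (a1 + a2 + a3) ^ 2) * (x ^ 2 - x)"
proof -
  \<comment> \<open>with these rules simp's ring normalisation works modulo 2\<close>
  have char2: "y + y = 0" "y + (y + z) = z" "- y = y" for y z :: 'a
    using assms by (simp_all add: add.assoc[symmetric] flip: mult_2)
  show ?thesis
    by (simp add: Jtrace_def block_def emat_def trace_def numeral_2_eq_2 algebra_simps power2_eq_square char2)
qed

lemma Jtrace_shift:
  fixes a1 a2 a3 b1 b2 b3 x :: "'a::field"
  assumes "prime p" "of_nat p = (0::'a)"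
  shows "Jtrace p a1 a2 a3 b1 b2 b3 x = Jtrace p a1 a2 a3 b1 b2 b3 0
     + (if p = 2 then 1 + (a1 + a2 + a3) ^ 2 else (a1 + a2 + a3) ^ p) * (x ^ p - x)"
proof (cases "p = 2")
  case True
  hence "(2::'a) = 0" using assms(2) by simp
  thus ?thesis using True Jtrace_shift_2[of a1 a2 a3 b1 b2 b3 x] by simp
next
  case False
  hence "2 < p" using prime_ge_2_nat[OF assms(1)] by linarith
  hence "odd p" using prime_odd_nat[OF assms(1)] by blast
  thus ?thesis using Jtrace_shift_odd[OF assms, of a1 a2 a3 b1 b2 b3 x] False by simp
qed

section \<open>The symmetries of I_p\<close>

definition of_mat2 :: "'a mat2 \<Rightarrow> 'a m2" where
  "of_mat2 X = (case X of (a, b, c, d) \<Rightarrow> M2 a b c d)"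

lemma of_mat2_mmul2: "of_mat2 (mmul2 X Y) = of_mat2 X * of_mat2 Y"
  by (cases X; cases Y) (auto simp: of_mat2_def intro!: m2_eqI)

lemma tr2_eq_trace: "tr2 X = trace (of_mat2 X)"
  by (cases X) (simp add: of_mat2_def trace_def)

lemma of_mat2_prodA:
  "of_mat2 (prodA w f g a1 a2 t n) = prod_desc (\<lambda>i. of_mat2 (Amat w f g a1 a2 t (of_nat i))) n"
  by (induction n) (simp_all add: of_mat2_mmul2, simp add: of_mat2_def id2_def one_m2_def)

lemma Ip_eq_Jtrace:
  fixes w f g a1 a2 t :: "'a::field"
  assumes "w \<noteq> 0" "of_nat p = (0::'a)"
  shows "Ip p w f g a1 a2 t = Jtrace p g (-f) (f - g + t) a2 0 (-a1) 0"
proof -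
  define W where "W = M2 w 0 0 (1::'a)"
  define W' where "W' = M2 (inverse w) 0 0 (1::'a)"
  define L where "L z = M2 1 0 (f - t * f * g - t * z) (1::'a)" for z
  define B where "B z = emat g (z + a2) * emat (-f) z * M2 (t * z - g + t * f * g) 1 (z - a1) (0::'a)"
    for z
  have WW: "W * W' = 1" "W' * W = 1" using assms(1) by (auto simp: W_def W'_def intro!: m2_eqI)
  have A: "of_mat2 (Amat w f g a1 a2 t z) = W * (L z * B z) * W'" for z
    by (rule m2_eqI) (simp_all add: Amat_def of_mat2_def W_def W'_def L_def B_def emat_def algebra_simps)
  have "M2 (t * z - g + t * f * g) 1 (z - a1) 0 * L (z - 1) = emat (f - g + t) (z - a1)" for z
    by (rule m2_eqI) (simp_all add: L_def emat_def algebra_simps)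
  hence BL: "B z * L (z - 1) = block g (-f) (f - g + t) a2 0 (-a1) (z + 0)" for z
    by (simp add: B_def block_def mult.assoc)
  have "Ip p w f g a1 a2 t = trace (W * prod_desc (\<lambda>i. L (of_nat i) * B (of_nat i)) p * W')"
    by (simp add: Ip_def tr2_eq_trace of_mat2_prodA A prod_desc_conj[OF WW])
  also have "\<dots> = trace (prod_desc (\<lambda>i. L (of_nat i) * B (of_nat i)) p)"
    by (simp add: trace_mult_commute[of W] mult.assoc WW)
  also have "\<dots> = trace (prod_desc (\<lambda>i. B (of_nat i) * L (of_nat i - 1)) p)"
    by (rule trace_prod_desc_regroup[OF assms(2)])
  finally show ?thesis by (simp add: Jtrace_def BL)
qed

lemma Jtrace_shift_params:
  "Jtrace p a1 a2 a3 b1 b2 b3 (x + s) = Jtrace p a1 a2 a3 (b1 + s) (b2 + s) (b3 + s) x"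
  by (simp add: Jtrace_def block_def add_ac)

lemma Jtrace_rotate:
  fixes a1 a2 a3 b1 b2 b3 x :: "'a::comm_ring_1"
  assumes "of_nat p = (0::'a)"
  shows "Jtrace p a1 a2 a3 b1 b2 b3 x = Jtrace p a2 a3 a1 b2 b3 (b1 - 1) x"
proof -
  define X where "X z = emat a1 (z + x + b1)" for z
  define Y where "Y z = emat a2 (z + x + b2) * emat a3 (z + x + b3)" for z
  have "Jtrace p a1 a2 a3 b1 b2 b3 x = trace (prod_desc (\<lambda>i. X (of_nat i) * Y (of_nat i)) p)"
    by (simp add: Jtrace_def block_def X_def Y_def mult.assoc add_ac)
  also have "\<dots> = trace (prod_desc (\<lambda>i. Y (of_nat i) * X (of_nat i - 1)) p)"
    by (rule trace_prod_desc_regroup[OF assms])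
  also have "\<dots> = Jtrace p a2 a3 a1 b2 b3 (b1 - 1) x"
    by (simp add: Jtrace_def block_def X_def Y_def algebra_simps)
  finally show ?thesis .
qed

text \<open>The elementary move behind the symmetries s0, s1, s2.\<close>
lemma emat_swap:
  fixes a2 :: "'a::field"
  assumes "a2 \<noteq> 0"
  shows "emat a1 w * emat a2 u * emat a3 v = emat (a1 + (u - v) / a2) w * emat a2 v * emat (a3 + (v - u) / a2) u"
  using assms by (intro m2_eqI) (simp_all add: emat_def field_simps)

lemma Jtrace_swap:
  fixes a2 :: "'a::field"
  assumes "a2 \<noteq> 0"
  shows "Jtrace p a1 a2 a3 b1 b2 b3 x = Jtrace p (a1 + (b2 - b3) / a2) a2 (a3 + (b3 - b2) / a2) b1 b3 b2 x"
  unfolding Jtrace_def block_def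
  by (intro arg_cong[where f = trace] prod_desc_cong, subst emat_swap[OF assms]) (simp add: algebra_simps)

lemma Ip_s1:
  fixes F G A1 A2 T w :: "'a::field"
  assumes "w \<noteq> 0" "of_nat p = (0::'a)" "F \<noteq> 0"
  shows "Ip p w F (G - A1 / F) (- A1) (A1 + A2) T = Jtrace p G (-F) (F - G + T) A2 0 (-A1) A1"
proof -
  have "Ip p w F (G - A1 / F) (- A1) (A1 + A2) T
      = Jtrace p (G - A1 / F) (-F) (F - (G - A1 / F) + T) (A1 + A2) 0 (- (- A1)) 0"
    by (rule Ip_eq_Jtrace[OF assms(1,2)])
  also have "\<dots> = Jtrace p G (-F) (F - G + T) (A2 + A1) (0 + A1) (- A1 + A1) 0"
    using assms(3) by (subst Jtrace_swap) (simp_all add: algebra_simps)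
  also have "\<dots> = Jtrace p G (-F) (F - G + T) A2 0 (-A1) A1"
    using Jtrace_shift_params[of p G "-F" "F - G + T" A2 0 "-A1" 0 A1] by simp
  finally show ?thesis .
qed

lemma Ip_s2:
  fixes F G A1 A2 T w :: "'a::field"
  assumes "w \<noteq> 0" "of_nat p = (0::'a)" "G \<noteq> 0"
  shows "Ip p w (F + A2 / G) G (A1 + A2) (- A2) T = Jtrace p G (-F) (F - G + T) A2 0 (-A1) (-A2)"
proof -
  have "Ip p w (F + A2 / G) G (A1 + A2) (- A2) T
      = Jtrace p G (- (F + A2 / G)) (F + A2 / G - G + T) (- A2) 0 (- (A1 + A2)) 0"
    by (rule Ip_eq_Jtrace[OF assms(1,2)])
  also have "\<dots> = Jtrace p (F + A2 / G - G + T) G (- (F + A2 / G)) (- (A1 + A2)) (- A2 - 1) (0 - 1) 0"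
    using Jtrace_rotate[OF assms(2)] by metis
  also have "\<dots> = Jtrace p (F - G + T) G (-F) (-A1 + - A2) (A2 - 1 + - A2) (-1 + - A2) 0"
    using assms(3) by (subst Jtrace_swap) (simp_all add: algebra_simps)
  also have "\<dots> = Jtrace p (F - G + T) G (-F) (-A1) (A2 - 1) (-1) (- A2)"
    using Jtrace_shift_params[of p "F - G + T" G "-F" "-A1" "A2 - 1" "-1" 0 "- A2"]
    by (simp add: algebra_simps)
  also have "\<dots> = Jtrace p G (-F) (F - G + T) A2 0 (-A1) (-A2)"
    using Jtrace_rotate[OF assms(2)] by (metis diff_self diff_0)
  finally show ?thesis .
qed

lemma Ip_pi:
  fixes F G A1 A2 T w :: "'a::field"
  assumes "w \<noteq> 0" "of_nat p = (0::'a)"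
  shows "Ip p w (- G) (F - G + T) A2 (1 - A1 - A2) T = Jtrace p G (-F) (F - G + T) A2 0 (-A1) (1 - A2)"
proof -
  have "Ip p w (- G) (F - G + T) A2 (1 - A1 - A2) T
      = Jtrace p (F - G + T) (- (- G)) (- G - (F - G + T) + T) (1 - A1 - A2) 0 (- A2) 0"
    by (rule Ip_eq_Jtrace[OF assms])
  also have "\<dots> = Jtrace p (F - G + T) G (-F) (-A1) (A2 - 1) (-1) (1 - A2)"
    using Jtrace_shift_params[of p "F - G + T" G "-F" "-A1" "A2 - 1" "-1" 0 "1 - A2"]
    by (simp add: algebra_simps)
  also have "\<dots> = Jtrace p G (-F) (F - G + T) A2 0 (-A1) (1 - A2)"
    using Jtrace_rotate[OF assms(2)] by (metis diff_self diff_0)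
  finally show ?thesis .
qed

lemma Ip_s0:
  fixes F G A1 A2 T w :: "'a::field"
  assumes "w \<noteq> 0" "of_nat p = (0::'a)" "F - G + T \<noteq> 0"
  shows "Ip p w (F + (A1 + A2 - 1) / (F - G + T)) (G + (A1 + A2 - 1) / (F - G + T)) (1 - A2) (1 - A1) T
       = Jtrace p G (-F) (F - G + T) A2 0 (-A1) 0"
proof -
  define d where "d = (A1 + A2 - 1) / (F - G + T)"
  have "Ip p w (F + d) (G + d) (1 - A2) (1 - A1) T
      = Jtrace p (G + d) (- (F + d)) (F + d - (G + d) + T) (1 - A1) 0 (- (1 - A2)) 0"
    by (rule Ip_eq_Jtrace[OF assms(1,2)])
  also have "\<dots> = Jtrace p (- (F + d)) (F - G + T) (G + d) 0 (- (1 - A2)) (1 - A1 - 1) 0"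
    using Jtrace_rotate[OF assms(2), of "G + d" "- (F + d)" "F + d - (G + d) + T" "1 - A1" 0] by simp
  also have "\<dots> = Jtrace p (-F) (F - G + T) G 0 (-A1) (A2 - 1) 0"
  proof (subst Jtrace_swap[OF assms(3)])
    have "- (1 - A2) - (1 - A1 - 1) = A1 + A2 - 1" "1 - A1 - 1 - - (1 - A2) = - (A1 + A2 - 1)"
      by simp_all
    thus "Jtrace p (- (F + d) + (- (1 - A2) - (1 - A1 - 1)) / (F - G + T)) (F - G + T)
        (G + d + (1 - A1 - 1 - - (1 - A2)) / (F - G + T)) 0 (1 - A1 - 1) (- (1 - A2)) 0
      = Jtrace p (-F) (F - G + T) G 0 (-A1) (A2 - 1) 0"
      by (simp only: minus_divide_left[symmetric] flip: d_def) simp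
  qed
  also have "\<dots> = Jtrace p G (-F) (F - G + T) A2 0 (-A1) 0"
    using Jtrace_rotate[OF assms(2), of G "-F" "F - G + T" A2 0 "-A1" 0] by simp
  finally show ?thesis by (simp add: d_def)
qed

lemma Ip_symmetries:
  fixes F G A1 A2 T w :: "'a::field"
  assumes "prime p" "of_nat p = (0::'a)" "w \<noteq> 0" "F \<noteq> 0" "G \<noteq> 0" "F - G + T \<noteq> 0"
  defines "c \<equiv> if p = 2 then 1 + T ^ 2 else T ^ p"
  shows "Ip p w (F + (A1 + A2 - 1) / (F - G + T)) (G + (A1 + A2 - 1) / (F - G + T)) (1 - A2) (1 - A1) T
      = Ip p w F G A1 A2 T"
    and "Ip p w F (G - A1 / F) (- A1) (A1 + A2) T = Ip p w F G A1 A2 T + c * (A1 ^ p - A1)"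
    and "Ip p w (F + A2 / G) G (A1 + A2) (- A2) T = Ip p w F G A1 A2 T - c * (A2 ^ p - A2)"
    and "Ip p w (- G) (F - G + T) A2 (1 - A1 - A2) T = Ip p w F G A1 A2 T - c * (A2 ^ p - A2)"
proof -
  define J where "J = Jtrace p G (-F) (F - G + T) A2 0 (-A1)"
  have shift: "J x = J 0 + c * (x ^ p - x)" for x
    using Jtrace_shift[OF assms(1,2), of G "-F" "F - G + T" A2 0 "-A1" x] by (simp add: J_def c_def)
  have I: "Ip p w F G A1 A2 T = J 0" by (simp add: J_def Ip_eq_Jtrace[OF assms(3,2)])
  show "Ip p w (F + (A1 + A2 - 1) / (F - G + T)) (G + (A1 + A2 - 1) / (F - G + T)) (1 - A2) (1 - A1) T
      = Ip p w F G A1 A2 T"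
    using Ip_s0[OF assms(3,2,6)] by (simp add: I J_def)
  show "Ip p w F (G - A1 / F) (- A1) (A1 + A2) T = Ip p w F G A1 A2 T + c * (A1 ^ p - A1)"
    using Ip_s1[OF assms(3,2,4)] shift[of A1] by (simp add: I J_def)
  have "(- A2) ^ p = - (A2 ^ p)"
    using minus_power_prime_CHAR[OF CHAR_eq_prime[OF assms(1,2), symmetric] assms(1)] .
  moreover have "Ip p w (F + A2 / G) G (A1 + A2) (- A2) T = J (- A2)"
    using Ip_s2[OF assms(3,2,5)] by (simp add: J_def)
  ultimately show "Ip p w (F + A2 / G) G (A1 + A2) (- A2) T = Ip p w F G A1 A2 T - c * (A2 ^ p - A2)"
    using shift[of "- A2"] by (simp add: I algebra_simps)
  have pow: "(1 - A2) ^ p = 1 - A2 ^ p" using diff_power_prime_char[OF assms(1,2)] by simp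
  have "Ip p w (- G) (F - G + T) A2 (1 - A1 - A2) T = J (1 - A2)"
    using Ip_pi[OF assms(3,2)] by (simp add: J_def)
  thus "Ip p w (- G) (F - G + T) A2 (1 - A1 - A2) T = Ip p w F G A1 A2 T - c * (A2 ^ p - A2)"
    using shift[of "1 - A2", unfolded pow] by (simp add: I algebra_simps)
qed

section \<open>The rational function field\<close>

lemma of_nat_CHAR_ratfun5: "of_nat CHAR('k::field) = (0::'k ratfun5)"
proof -
  have "of_nat CHAR('k) = (0::'k poly5)" by (metis of_nat_CHAR semiring_char_poly)
  thus ?thesis by (simp add: of_nat_fract Zero_fract_def)
qed

lemma Fract_1_nonzero: "(a::'k::field poly5) \<noteq> 0 \<Longrightarrow> Fract a 1 \<noteq> 0"
  by (simp add: Zero_fract_def eq_fract)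

lemma varF_nonzero: "(varF :: 'k::field ratfun5) \<noteq> 0"
  unfolding varF_def by (rule Fract_1_nonzero) (simp add: monom_eq_0_iff)

lemma varG_nonzero: "(varG :: 'k::field ratfun5) \<noteq> 0"
  unfolding varG_def by (rule Fract_1_nonzero) (simp add: monom_eq_0_iff)

lemma varF_minus_varG_plus_varT_nonzero: "(varF - varG + varT :: 'k::field ratfun5) \<noteq> 0"
proof -
  define P where "P = ([:[:[:[:monom 1 1:]:]:]:] - [:[:[:monom 1 1:]:]:] + monom 1 1 :: 'k poly5)"
  have "coeff P 1 = 1" by (simp add: P_def)
  hence "Fract P 1 \<noteq> 0" by (intro Fract_1_nonzero) auto
  thus ?thesis by (simp add: varF_def varG_def varT_def P_def)
qed

theorem theorem3p6:
  fixes w :: "'k::field ratfun5"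
  assumes "prime p" and "CHAR('k) = p" and "w \<noteq> 0"
  shows "let F = (varF :: 'k ratfun5); G = varG; A1 = varA1; A2 = varA2; T = varT;
             I = Ip p w F G A1 A2 T;
             c = (if p = 2 then 1 + T^2 else T^p)
         in Ip p w (F + (A1 + A2 - 1) / (F - G + T)) (G + (A1 + A2 - 1) / (F - G + T))
               (1 - A2) (1 - A1) T = I
          \<and> Ip p w F (G - A1 / F) (- A1) (A1 + A2) T = I + c * (A1^p - A1)
          \<and> Ip p w (F + A2 / G) G (A1 + A2) (- A2) T = I - c * (A2^p - A2)
          \<and> Ip p w (- G) (F - G + T) A2 (1 - A1 - A2) T = I - c * (A2^p - A2)"
proof -
  have "of_nat p = (0::'k ratfun5)" using of_nat_CHAR_ratfun5 assms(2) by metis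
  from Ip_symmetries[OF assms(1) this assms(3) varF_nonzero varG_nonzero
      varF_minus_varG_plus_varT_nonzero]
  show ?thesis unfolding Let_def by blast
qed

end
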